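(* Let $k \ge 1$ be an integer and let $G$ be a $k$-degenerate graph with maximum degree $\Delta$, where $k \le \Delta$. Then $\chi_s'(G) \le (4k-2)\Delta - 2k^2 + 1$.
   Context: All graphs are finite and simple. A graph is $k$-degenerate if every subgraph of it has a vertex of degree at most $k$. A strong edge coloring of $G$ is an assignment of colors to the edges of $G$ such that every path with three edges receives three distinct colors; equivalently, any two distinct edges that share an endpoint, or that are both incident with a common edge (i.e., an endpoint of one is adjacent to an endpoint of the other), receive different colors. The strong chromatic index $\chi_s'(G)$ is the minimum number of colors in a strong edge coloring of $G$. *)

theory Defs
  imports Main
begin

definition simple_graph :: "'a set \<Rightarrow> 'a set set \<Rightarrow> bool" where
  "simple_graph V E \<longleftrightarrow> finite V \<and> (\<forall>e\<in>E. \<exists>u v. e = {u, v} \<and> u \<noteq> v \<and> u \<in> V \<and> v \<in> V)"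

definition degree :: "'a set set \<Rightarrow> 'a \<Rightarrow> nat" where
  "degree E v = card {e \<in> E. v \<in> e}"

definition max_degree :: "'a set \<Rightarrow> 'a set set \<Rightarrow> nat" where
  "max_degree V E = (if V = {} then 0 else Max (degree E ` V))"

definition subgraph :: "'a set \<Rightarrow> 'a set set \<Rightarrow> 'a set \<Rightarrow> 'a set set \<Rightarrow> bool" where
  "subgraph V' E' V E \<longleftrightarrow> V' \<subseteq> V \<and> E' \<subseteq> E \<and> (\<forall>e\<in>E'. e \<subseteq> V')"

definition degenerate :: "nat \<Rightarrow> 'a set \<Rightarrow> 'a set set \<Rightarrow> bool" where
  "degenerate k V E \<longleftrightarrow>
     (\<forall>V' E'. subgraph V' E' V E \<and> V' \<noteq> {} \<longrightarrow> (\<exists>v\<in>V'. degree E' v \<le> k))"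

definition strong_conflict :: "'a set set \<Rightarrow> 'a set \<Rightarrow> 'a set \<Rightarrow> bool" where
  "strong_conflict E e f \<longleftrightarrow> e \<noteq> f \<and>
     (e \<inter> f \<noteq> {} \<or> (\<exists>x\<in>e. \<exists>y\<in>f. {x, y} \<in> E))"

definition strong_edge_coloring :: "'a set set \<Rightarrow> ('a set \<Rightarrow> nat) \<Rightarrow> nat \<Rightarrow> bool" where
  "strong_edge_coloring E c n \<longleftrightarrow>
     (\<forall>e\<in>E. c e < n) \<and>
     (\<forall>e\<in>E. \<forall>f\<in>E. strong_conflict E e f \<longrightarrow> c e \<noteq> c f)"

definition strong_chromatic_index :: "'a set set \<Rightarrow> nat" where
  "strong_chromatic_index E = (LEAST n. \<exists>c. strong_edge_coloring E c n)"

end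

theory Submission
  imports Defs
begin

text \<open>Order the vertices so that every vertex has at most k earlier neighbours (a degeneracy
ordering) and rank each edge by its earlier endpoint. In any set S of edges, the edge xy of largest
rank, with x before y, conflicts only with edges whose earlier endpoint is no later than x. Such an
edge either contains x, or joins y to an earlier neighbour of y, or is joined to x or y through a
vertex t: through an earlier neighbour t there are at most \<Delta> - 1 choices of the edge at t, through a
later neighbour t the edge must join t to one of its other at most k - 1 earlier neighbours. Summing
these counts gives at most (4k - 2)\<Delta> - 2k^2 conflicts, so the conflict graph on the edges is
degenerate to that extent and a greedy coloring uses at most one color more.\<close>

lemma simple_graph_finite_edges:
  assumes "simple_graph V E"
  shows "finite E"
proof (rule finite_subset)
  show "E \<subseteq> Pow V" using assms by (auto simp: simple_graph_def)
  show "finite (Pow V)" using assms by (simp add: simple_graph_def)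
qed

lemma simple_graph_edgeE:
  assumes "simple_graph V E" "f \<in> E"
  obtains a b where "f = {a, b}" "a \<noteq> b" "a \<in> V" "b \<in> V"
  using assms unfolding simple_graph_def by blast

lemma simple_graph_edge_atE:
  assumes "simple_graph V E" "f \<in> E" "y \<in> f"
  obtains c where "f = {c, y}" "c \<noteq> y" "c \<in> V" "y \<in> V"
proof -
  obtain a b where "f = {a, b}" "a \<noteq> b" "a \<in> V" "b \<in> V"
    using simple_graph_edgeE[OF assms(1,2)] .
  then show ?thesis using that assms(3) by (auto simp: insert_commute)
qed

lemma simple_graph_edge_endpoints:
  assumes "simple_graph V E" "{u, v} \<in> E"
  shows "u \<noteq> v" "u \<in> V" "v \<in> V"
  using simple_graph_edgeE[OF assms] by (metis doubleton_eq_iff)+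

lemma card_neighbours_le_degree:
  assumes "finite E"
  shows "card {u \<in> W. {u, v} \<in> E} \<le> degree E v"
  unfolding degree_def
  by (rule card_inj_on_le[where f = "\<lambda>u. {u, v}"])
     (auto simp: inj_on_def doubleton_eq_iff assms)

lemma degree_le_max_degree:
  assumes "finite V" "v \<in> V"
  shows "degree E v \<le> max_degree V E"
  using assms by (auto simp: max_degree_def)

lemma strong_conflict_sym: "strong_conflict E e f \<Longrightarrow> strong_conflict E f e"
  unfolding strong_conflict_def by (metis inf_commute insert_commute)

lemma strong_chromatic_index_le:
  assumes "strong_edge_coloring E c n"
  shows "strong_chromatic_index E \<le> n"
  unfolding strong_chromatic_index_def using assms by (blast intro: Least_le)

lemma greedy_coloring:
  assumes "finite X"
    and "\<And>S. S \<subseteq> X \<Longrightarrow> S \<noteq> {} \<Longrightarrow> \<exists>e\<in>S. card {f \<in> S. R e f} \<le> N"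
    and "symp R" "irreflp R"
  shows "\<exists>c. (\<forall>e\<in>X. c e < Suc N) \<and> (\<forall>e\<in>X. \<forall>f\<in>X. R e f \<longrightarrow> c e \<noteq> c f)"
  using assms(1,2)
proof (induction X rule: finite_psubset_induct)
  case (psubset X)
  show ?case
  proof (cases "X = {}")
    case False
    then obtain e where e: "e \<in> X" "card {f \<in> X. R e f} \<le> N"
      using psubset.prems by blast
    have "X - {e} \<subset> X" using e(1) by blast
    then have "\<exists>c. (\<forall>g\<in>X - {e}. c g < Suc N) \<and>
        (\<forall>g\<in>X - {e}. \<forall>f\<in>X - {e}. R g f \<longrightarrow> c g \<noteq> c f)"
      by (rule psubset.IH) (use psubset.prems in blast)
    then obtain c where c: "\<forall>g\<in>X - {e}. c g < Suc N"
      "\<forall>g\<in>X - {e}. \<forall>f\<in>X - {e}. R g f \<longrightarrow> c g \<noteq> c f"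
      by blast
    let ?used = "c ` {f \<in> X. R e f}"
    have "card ?used \<le> N"
      using card_image_le[of "{f \<in> X. R e f}" c] psubset.hyps e(2) by simp
    moreover have "finite ?used" using psubset.hyps by simp
    ultimately have "\<not> {..<Suc N} \<subseteq> ?used"
      by (metis card_lessThan card_mono not_less_eq_eq)
    then obtain col where col: "col < Suc N" "col \<notin> ?used"
      by (meson lessThan_iff subsetI)
    have "(c(e := col)) g \<noteq> (c(e := col)) f" if "g \<in> X" "f \<in> X" "R g f" for g f
    proof -
      have "g \<noteq> f" using \<open>R g f\<close> assms(4) by (auto dest: irreflpD)
      moreover have "R e g" if "f = e" using \<open>R g f\<close> that assms(3) by (blast dest: sympD)
      ultimately show ?thesis using c(2) col(2) that by auto
    qed
    moreover have "(c(e := col)) g < Suc N" if "g \<in> X" for g using c(1) col(1) that by simp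
    ultimately show ?thesis by blast
  qed simp
qed

lemma degenerate_low_vertex:
  assumes "simple_graph V E" "degenerate k V E" "W \<subseteq> V" "W \<noteq> {}"
  shows "\<exists>v\<in>W. card {u \<in> W. {u, v} \<in> E} \<le> k"
proof -
  define E' where "E' = {e \<in> E. e \<subseteq> W}"
  have "subgraph W E' V E" using assms(3) by (auto simp: subgraph_def E'_def)
  then obtain v where v: "v \<in> W" "degree E' v \<le> k"
    using assms(2,4) unfolding degenerate_def by blast
  have "{u \<in> W. {u, v} \<in> E} = {u \<in> W. {u, v} \<in> E'}" using v(1) by (auto simp: E'_def)
  also have "card \<dots> \<le> degree E' v"
    using simple_graph_finite_edges[OF assms(1)] by (intro card_neighbours_le_degree) (simp add: E'_def)
  also have "\<dots> \<le> k" by (rule v(2))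
  finally show ?thesis using v(1) by blast
qed

definition lower_nbrs :: "'a set \<Rightarrow> 'a set set \<Rightarrow> ('a \<Rightarrow> nat) \<Rightarrow> 'a \<Rightarrow> 'a set" where
  "lower_nbrs V E r v = {u \<in> V. {u, v} \<in> E \<and> r u < r v}"

definition upper_nbrs :: "'a set \<Rightarrow> 'a set set \<Rightarrow> ('a \<Rightarrow> nat) \<Rightarrow> 'a \<Rightarrow> 'a set" where
  "upper_nbrs V E r v = {u \<in> V. {u, v} \<in> E \<and> r v < r u}"

lemma degeneracy_ordering_on:
  assumes "simple_graph V E" "degenerate k V E" "W \<subseteq> V"
  shows "\<exists>r. inj_on r W \<and> r ` W \<subseteq> {..<card W} \<and> (\<forall>v\<in>W. card (lower_nbrs W E r v) \<le> k)"
proof -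
  have "finite W" using assms(1,3) finite_subset by (auto simp: simple_graph_def)
  then show ?thesis using assms(3)
  proof (induction W rule: finite_psubset_induct)
    case (psubset W)
    show ?case
    proof (cases "W = {}")
      case False
      then obtain v where v: "v \<in> W" "card {u \<in> W. {u, v} \<in> E} \<le> k"
        using degenerate_low_vertex[OF assms(1,2) psubset.prems] by blast
      have smaller: "W - {v} \<subset> W" "W - {v} \<subseteq> V" using v(1) psubset.prems by auto
      then obtain r where r: "inj_on r (W - {v})" "r ` (W - {v}) \<subseteq> {..<card (W - {v})}"
        "\<forall>w\<in>W - {v}. card (lower_nbrs (W - {v}) E r w) \<le> k"
        using psubset.IH[OF smaller] by blast
      have card_W: "card (W - {v}) = card W - 1" "card W \<ge> 1"
        using psubset.hyps v(1) by (auto simp: Suc_le_eq card_gt_0_iff)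
      define r' where "r' = r(v := card W - 1)"
      have "inj_on r' (W - {v})" using r(1) by (simp add: r'_def inj_on_def)
      moreover have "r' v \<notin> r' ` (W - {v})" using r(2) card_W by (auto simp: r'_def)
      ultimately have "inj_on r' W"
        using inj_on_insert[of r' v "W - {v}"] v(1) by (simp add: insert_absorb)
      moreover have "r' ` W \<subseteq> {..<card W}" using r(2) card_W by (auto simp: r'_def)
      moreover have "card (lower_nbrs W E r' w) \<le> k" if "w \<in> W" for w
      proof (cases "w = v")
        case True
        have "lower_nbrs W E r' w \<subseteq> {u \<in> W. {u, v} \<in> E}"
          using True by (auto simp: lower_nbrs_def)
        then have "card (lower_nbrs W E r' w) \<le> card {u \<in> W. {u, v} \<in> E}"
          using psubset.hyps by (intro card_mono) auto
        then show ?thesis using v(2) by linarith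
      next
        case False
        have "r w < card W - 1" using r(2) card_W False that by auto
        then have "lower_nbrs W E r' w \<subseteq> lower_nbrs (W - {v}) E r w"
          using False by (auto simp: lower_nbrs_def r'_def)
        then have "card (lower_nbrs W E r' w) \<le> card (lower_nbrs (W - {v}) E r w)"
          using psubset.hyps by (intro card_mono) (auto simp: lower_nbrs_def)
        moreover have "card (lower_nbrs (W - {v}) E r w) \<le> k" using r(3) False that by blast
        ultimately show ?thesis by linarith
      qed
      ultimately show ?thesis by blast
    qed simp
  qed
qed

lemma strong_conflict_count_arith:
  fixes k D lx ux ly uy :: nat
  assumes "lx \<le> k" "ly \<le> k" "lx + ux \<le> D" "ly + uy \<le> D" "1 \<le> k" "k \<le> D" "1 \<le> ly" "1 \<le> ux"
  shows "int ((D - 1) + (ly - 1) + (lx * (D - 1) + (ux - 1) * (k - 1)) + ((ly - 1) * (D - 1) + uy * (k - 1)))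
    \<le> (4 * int k - 2) * int D - 2 * (int k)^2"
proof -
  have "int (D - 1) = int D - 1" "int (ly - 1) = int ly - 1" "int (ux - 1) = int ux - 1"
    "int (k - 1) = int k - 1"
    using assms by auto
  then have "int ((D - 1) + (ly - 1) + (lx * (D - 1) + (ux - 1) * (k - 1)) + ((ly - 1) * (D - 1) + uy * (k - 1)))
      = (int D - 1) + (int ly - 1) + (int lx * (int D - 1) + (int ux - 1) * (int k - 1))
        + ((int ly - 1) * (int D - 1) + int uy * (int k - 1))"
    by (simp only: of_nat_add of_nat_mult)
  also have "\<dots> = ((4 * int k - 2) * int D - 2 * (int k)^2)
        - ((int k - int lx) * (int D - int k) + (int D - int lx - int ux) * (int k - 1)
          + (int k - int ly) * (int D - int k + 1) + (int D - int ly - int uy) * (int k - 1))"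
    by (simp add: algebra_simps power2_eq_square)
  moreover have "0 \<le> (int k - int lx) * (int D - int k)" "0 \<le> (int D - int lx - int ux) * (int k - 1)"
    "0 \<le> (int k - int ly) * (int D - int k + 1)" "0 \<le> (int D - int ly - int uy) * (int k - 1)"
    using assms by simp_all
  ultimately show ?thesis by linarith
qed

locale degeneracy_ordered_graph =
  fixes V :: "'a set" and E :: "'a set set" and r :: "'a \<Rightarrow> nat" and k D :: nat
  assumes simple: "simple_graph V E"
    and rank_inj: "inj_on r V"
    and card_lower_le: "\<And>v. v \<in> V \<Longrightarrow> card (lower_nbrs V E r v) \<le> k"
    and degree_le: "\<And>v. v \<in> V \<Longrightarrow> degree E v \<le> D"
begin

abbreviation lower :: "'a \<Rightarrow> 'a set" where "lower \<equiv> lower_nbrs V E r"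
abbreviation upper :: "'a \<Rightarrow> 'a set" where "upper \<equiv> upper_nbrs V E r"

lemma finite_vertices: "finite V"
  using simple by (simp add: simple_graph_def)

lemma finite_edges: "finite E"
  using simple by (rule simple_graph_finite_edges)

lemma finite_lower: "finite (lower v)" and finite_upper: "finite (upper v)"
  using finite_vertices by (simp_all add: lower_nbrs_def upper_nbrs_def)

lemma mem_lower_iff_mem_upper: "s \<in> lower t \<longleftrightarrow> t \<in> upper s"
  using simple_graph_edge_endpoints[OF simple]
  by (auto simp: lower_nbrs_def upper_nbrs_def insert_commute)

lemma card_lower_upper_le:
  assumes "v \<in> V"
  shows "card (lower v) + card (upper v) \<le> D"
proof -
  have "card (lower v) + card (upper v) = card (lower v \<union> upper v)"
    using finite_lower finite_upper
    by (intro card_Un_disjoint[symmetric]) (auto simp: lower_nbrs_def upper_nbrs_def)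
  also have "\<dots> \<le> card {u \<in> V. {u, v} \<in> E}"
    using finite_vertices by (intro card_mono) (auto simp: lower_nbrs_def upper_nbrs_def)
  also have "\<dots> \<le> degree E v"
    using finite_edges by (rule card_neighbours_le_degree)
  finally show ?thesis using degree_le[OF assms] by linarith
qed

lemma card_incident_but_one:
  assumes "{s, t} \<in> E"
  shows "card ({f \<in> E. t \<in> f} - {{s, t}}) \<le> D - 1"
proof -
  have "card {f \<in> E. t \<in> f} \<le> D"
    using degree_le simple_graph_edge_endpoints(3)[OF simple assms] by (simp add: degree_def)
  then show ?thesis using assms finite_edges by (simp add: diff_le_mono)
qed

lemma card_lower_edges_but_one:
  assumes "s \<in> lower t"
  shows "card ((\<lambda>c. {c, t}) ` (lower t - {s})) \<le> k - 1"
proof -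
  have "t \<in> V"
    using assms simple_graph_edge_endpoints(3)[OF simple] by (auto simp: lower_nbrs_def)
  have "card ((\<lambda>c. {c, t}) ` (lower t - {s})) \<le> card (lower t - {s})"
    by (rule card_image_le) (simp add: finite_lower)
  also have "\<dots> = card (lower t) - 1" using assms finite_lower by simp
  also have "\<dots> \<le> k - 1" using card_lower_le[OF \<open>t \<in> V\<close>] by (rule diff_le_mono)
  finally show ?thesis .
qed

text \<open>Covers the edges f avoiding s and s' that are joined to s by an edge st and whose rank is at most
r s: if t precedes s, f is any other edge at t; otherwise f joins t to an earlier neighbour of t.\<close>
definition conflicts_via :: "'a \<Rightarrow> 'a \<Rightarrow> 'a set set" where
  "conflicts_via s s' =
     (\<Union>t\<in>lower s - {s'}. {f \<in> E. t \<in> f} - {{s, t}}) \<union>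
     (\<Union>t\<in>upper s - {s'}. (\<lambda>c. {c, t}) ` (lower t - {s}))"

lemma conflicts_via_subset: "conflicts_via s s' \<subseteq> E"
  by (auto simp: conflicts_via_def lower_nbrs_def)

lemma card_conflicts_via:
  "card (conflicts_via s s') \<le> card (lower s - {s'}) * (D - 1) + card (upper s - {s'}) * (k - 1)"
proof -
  have "card (\<Union>t\<in>lower s - {s'}. {f \<in> E. t \<in> f} - {{s, t}})
      \<le> (\<Sum>t\<in>lower s - {s'}. card ({f \<in> E. t \<in> f} - {{s, t}}))"
    by (rule card_UN_le) (simp add: finite_lower)
  also have "\<dots> \<le> card (lower s - {s'}) * (D - 1)"
  proof -
    have "card ({f \<in> E. t \<in> f} - {{s, t}}) \<le> D - 1" if "t \<in> lower s - {s'}" for t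
      using that by (intro card_incident_but_one) (simp add: lower_nbrs_def insert_commute)
    from sum_bounded_above[where A = "lower s - {s'}", OF this] show ?thesis by simp
  qed
  finally have lower_part: "card (\<Union>t\<in>lower s - {s'}. {f \<in> E. t \<in> f} - {{s, t}})
      \<le> card (lower s - {s'}) * (D - 1)" .
  have "card ((\<lambda>c. {c, t}) ` (lower t - {s})) \<le> k - 1" if "t \<in> upper s - {s'}" for t
    using that by (intro card_lower_edges_but_one) (simp add: mem_lower_iff_mem_upper)
  from sum_bounded_above[where A = "upper s - {s'}", OF this]
  have "(\<Sum>t\<in>upper s - {s'}. card ((\<lambda>c. {c, t}) ` (lower t - {s}))) \<le> card (upper s - {s'}) * (k - 1)"
    by simp
  with card_UN_le[of "upper s - {s'}" "\<lambda>t. (\<lambda>c. {c, t}) ` (lower t - {s})"]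
  have upper_part: "card (\<Union>t\<in>upper s - {s'}. (\<lambda>c. {c, t}) ` (lower t - {s}))
      \<le> card (upper s - {s'}) * (k - 1)"
    by (simp add: finite_upper)
  show ?thesis
    using lower_part upper_part card_Un_le unfolding conflicts_via_def by (meson add_mono order_trans)
qed

lemma conflict_via_edge:
  assumes "f \<in> E" "s \<notin> f" "s' \<notin> f" "t \<in> f" "{s, t} \<in> E" "Min (r ` f) \<le> r s"
  shows "f \<in> conflicts_via s s'"
proof -
  obtain c where f: "f = {c, t}" "c \<in> V" "t \<in> V"
    using simple_graph_edge_atE[OF simple assms(1,4)] by metis
  have "s \<in> V" "s \<noteq> t" using simple_graph_edge_endpoints[OF simple assms(5)] by auto
  then have "r t \<noteq> r s" using rank_inj \<open>t \<in> V\<close> by (auto dest: inj_onD)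
  then consider "r t < r s" | "r s < r t" by linarith
  then show ?thesis
  proof cases
    case 1
    then have "t \<in> lower s - {s'}" "f \<in> {f \<in> E. t \<in> f} - {{s, t}}"
      using assms f by (auto simp: lower_nbrs_def insert_commute)
    then show ?thesis unfolding conflicts_via_def by blast
  next
    case 2
    then have "r c \<le> r s" using assms(6) f by (auto simp: min_def split: if_splits)
    then have "t \<in> upper s - {s'}" "c \<in> lower t - {s}"
      using 2 assms f by (auto simp: lower_nbrs_def upper_nbrs_def insert_commute)
    then show ?thesis unfolding conflicts_via_def using f(1) by blast
  qed
qed

lemma conflict_at_later_vertex:
  assumes "f \<in> E" "y \<in> f" "x \<notin> f" "Min (r ` f) \<le> r x" "r x < r y"
  shows "f \<in> (\<lambda>c. {c, y}) ` (lower y - {x})"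
proof -
  obtain c where f: "f = {c, y}" "c \<in> V"
    using simple_graph_edge_atE[OF simple assms(1,2)] by metis
  then have "r c < r y" using assms(4,5) by (auto simp: min_def split: if_splits)
  then have "c \<in> lower y - {x}" using assms f by (auto simp: lower_nbrs_def)
  then show ?thesis using f(1) by blast
qed

lemma earlier_conflicts_subset:
  assumes "r x < r y"
  shows "{f \<in> E. strong_conflict E {x, y} f \<and> Min (r ` f) \<le> r x}
    \<subseteq> ({f \<in> E. x \<in> f} - {{x, y}}) \<union> (\<lambda>c. {c, y}) ` (lower y - {x})
       \<union> conflicts_via x y \<union> conflicts_via y x"
proof
  fix f assume "f \<in> {f \<in> E. strong_conflict E {x, y} f \<and> Min (r ` f) \<le> r x}"
  then have f: "f \<in> E" "f \<noteq> {x, y}" "Min (r ` f) \<le> r x"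
    and adjacent: "{x, y} \<inter> f \<noteq> {} \<or> (\<exists>s\<in>{x, y}. \<exists>t\<in>f. {s, t} \<in> E)"
    by (auto simp: strong_conflict_def)
  consider "x \<in> f" | "x \<notin> f" "y \<in> f" | "x \<notin> f" "y \<notin> f" by blast
  then show "f \<in> ({f \<in> E. x \<in> f} - {{x, y}}) \<union> (\<lambda>c. {c, y}) ` (lower y - {x})
       \<union> conflicts_via x y \<union> conflicts_via y x"
  proof cases
    case 2
    then show ?thesis using conflict_at_later_vertex f assms by blast
  next
    case 3
    then obtain s t where "s \<in> {x, y}" "t \<in> f" "{s, t} \<in> E" using adjacent by blast
    moreover have "Min (r ` f) \<le> r y" using f(3) assms by linarith
    ultimately show ?thesis using conflict_via_edge[OF f(1)] 3 f(3) by blast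
  qed (use f in blast)
qed

lemma card_earlier_conflicts:
  assumes "1 \<le> k" "k \<le> D" "{x, y} \<in> E" "r x < r y"
  shows "int (card {f \<in> E. strong_conflict E {x, y} f \<and> Min (r ` f) \<le> r x})
    \<le> (4 * int k - 2) * int D - 2 * (int k)^2"
proof -
  have "x \<in> V" "y \<in> V" using simple_graph_edge_endpoints[OF simple assms(3)] by auto
  have "x \<in> lower y" "y \<notin> lower x" "x \<notin> upper y"
    using assms(3,4) \<open>x \<in> V\<close> by (auto simp: lower_nbrs_def upper_nbrs_def)
  then have "y \<in> upper x" by (simp add: mem_lower_iff_mem_upper)
  have "1 \<le> card (lower y)" "1 \<le> card (upper x)"
    using \<open>x \<in> lower y\<close> \<open>y \<in> upper x\<close> finite_lower finite_upper
    by (auto simp: Suc_le_eq card_gt_0_iff)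
  have "card {f \<in> E. strong_conflict E {x, y} f \<and> Min (r ` f) \<le> r x}
      \<le> card (({f \<in> E. x \<in> f} - {{x, y}}) \<union> (\<lambda>c. {c, y}) ` (lower y - {x})
           \<union> conflicts_via x y \<union> conflicts_via y x)"
    using earlier_conflicts_subset[OF assms(4)] finite_edges conflicts_via_subset
    by (intro card_mono finite_subset[OF _ finite_edges]) (auto simp: lower_nbrs_def)
  also have "\<dots> \<le> card ({f \<in> E. x \<in> f} - {{x, y}}) + card ((\<lambda>c. {c, y}) ` (lower y - {x}))
      + card (conflicts_via x y) + card (conflicts_via y x)"
    by (meson add_mono card_Un_le order_trans le_refl)
  also have "\<dots> \<le> (D - 1) + (card (lower y) - 1)
      + (card (lower x) * (D - 1) + (card (upper x) - 1) * (k - 1))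
      + ((card (lower y) - 1) * (D - 1) + card (upper y) * (k - 1))"
  proof (intro add_mono)
    show "card ({f \<in> E. x \<in> f} - {{x, y}}) \<le> D - 1"
      using card_incident_but_one[of y x] assms(3) by (simp add: insert_commute)
    show "card ((\<lambda>c. {c, y}) ` (lower y - {x})) \<le> card (lower y) - 1"
      using card_image_le[of "lower y - {x}"] \<open>x \<in> lower y\<close> finite_lower by fastforce
    show "card (conflicts_via x y) \<le> card (lower x) * (D - 1) + (card (upper x) - 1) * (k - 1)"
      using card_conflicts_via[of x y] \<open>y \<notin> lower x\<close> \<open>y \<in> upper x\<close> finite_upper by simp
    show "card (conflicts_via y x) \<le> (card (lower y) - 1) * (D - 1) + card (upper y) * (k - 1)"
      using card_conflicts_via[of y x] \<open>x \<in> lower y\<close> \<open>x \<notin> upper y\<close> finite_lower by simp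
  qed
  finally have "int (card {f \<in> E. strong_conflict E {x, y} f \<and> Min (r ` f) \<le> r x})
      \<le> int ((D - 1) + (card (lower y) - 1)
        + (card (lower x) * (D - 1) + (card (upper x) - 1) * (k - 1))
        + ((card (lower y) - 1) * (D - 1) + card (upper y) * (k - 1)))"
    by (rule of_nat_mono)
  also have "\<dots> \<le> (4 * int k - 2) * int D - 2 * (int k)^2"
    by (intro strong_conflict_count_arith card_lower_le card_lower_upper_le)
      (use assms(1,2) \<open>x \<in> V\<close> \<open>y \<in> V\<close> \<open>1 \<le> card (lower y)\<close> \<open>1 \<le> card (upper x)\<close> in auto)
  finally show ?thesis .
qed

lemma exists_edge_few_conflicts:
  assumes "1 \<le> k" "k \<le> D" "S \<subseteq> E" "S \<noteq> {}"
  shows "\<exists>e\<in>S. int (card {f \<in> S. strong_conflict E e f}) \<le> (4 * int k - 2) * int D - 2 * (int k)^2"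
proof -
  have "finite S" using assms(3) finite_edges finite_subset by blast
  then obtain e where e: "e \<in> S" "Max ((\<lambda>f. Min (r ` f)) ` S) = Min (r ` e)"
    using obtains_MAX assms(4) by blast
  have latest: "Min (r ` f) \<le> Min (r ` e)" if "f \<in> S" for f
    using e(2) \<open>finite S\<close> that by (metis Max_ge finite_imageI imageI)
  obtain a b where ab: "e = {a, b}" "a \<noteq> b" "a \<in> V" "b \<in> V"
    using simple_graph_edgeE[OF simple] assms(3) e(1) by blast
  have "r a \<noteq> r b" using rank_inj ab by (auto dest: inj_onD)
  then obtain x y where xy: "e = {x, y}" "r x < r y"
    using ab(1) by (metis insert_commute linorder_neqE_nat)
  have "{f \<in> S. strong_conflict E e f} \<subseteq> {f \<in> E. strong_conflict E {x, y} f \<and> Min (r ` f) \<le> r x}"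
    using assms(3) latest xy by auto
  then have "card {f \<in> S. strong_conflict E e f}
      \<le> card {f \<in> E. strong_conflict E {x, y} f \<and> Min (r ` f) \<le> r x}"
    using finite_edges by (intro card_mono) auto
  moreover have "{x, y} \<in> E" using assms(3) e(1) xy(1) by blast
  ultimately have "int (card {f \<in> S. strong_conflict E e f}) \<le> (4 * int k - 2) * int D - 2 * (int k)^2"
    using card_earlier_conflicts[OF assms(1,2) _ xy(2)] by linarith
  then show ?thesis using e(1) by blast
qed

end

lemma strong_conflict_bound_nonneg:
  assumes "1 \<le> k" "k \<le> D"
  shows "0 \<le> (4 * int k - 2) * int D - 2 * (int k)^2"
proof -
  have "(4 * int k - 2) * int k \<le> (4 * int k - 2) * int D"
    using assms by (intro mult_left_mono) auto
  moreover have "0 \<le> 2 * int k * (int k - 1)" using assms(1) by simp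
  ultimately show ?thesis by (simp add: algebra_simps power2_eq_square)
qed

theorem theorem1:
  fixes V :: "'a set" and E :: "'a set set" and k :: nat
  assumes "simple_graph V E"
    and "k \<ge> 1"
    and "degenerate k V E"
    and "k \<le> max_degree V E"
  shows "int (strong_chromatic_index E)
           \<le> (4 * int k - 2) * int (max_degree V E) - 2 * (int k)^2 + 1"
proof -
  define D where "D = max_degree V E"
  have kD: "k \<le> D" using assms(4) by (simp add: D_def)
  define M where "M = (4 * int k - 2) * int D - 2 * (int k)^2"
  obtain r where r: "inj_on r V" "\<forall>v\<in>V. card (lower_nbrs V E r v) \<le> k"
    using degeneracy_ordering_on[OF assms(1,3) order_refl] by blast
  interpret degeneracy_ordered_graph V E r k D
    using assms(1) r degree_le_max_degree by unfold_locales (auto simp: D_def simple_graph_def)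
  have "\<exists>c. strong_edge_coloring E c (Suc (nat M))"
    unfolding strong_edge_coloring_def
  proof (rule greedy_coloring[OF finite_edges])
    fix S assume "S \<subseteq> E" "S \<noteq> {}"
    then obtain e where "e \<in> S" "int (card {f \<in> S. strong_conflict E e f}) \<le> M"
      using exists_edge_few_conflicts[OF assms(2) kD] unfolding M_def by blast
    then show "\<exists>e\<in>S. card {f \<in> S. strong_conflict E e f} \<le> nat M"
      by (auto simp: le_nat_iff)
  qed (auto simp: symp_def irreflp_def intro: strong_conflict_sym, simp add: strong_conflict_def)
  then have "strong_chromatic_index E \<le> Suc (nat M)"
    using strong_chromatic_index_le by blast
  moreover have "0 \<le> M" unfolding M_def using assms(2) kD by (rule strong_conflict_bound_nonneg)
  ultimately show ?thesis unfolding M_def D_def by linarith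
qed

end
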